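(* Let $(R,\mathfrak m,k)$ be a Noetherian local ring, $j\ge2$, and $M$ a finitely generated $R$-module with $p:=\operatorname{pd}_RM<\infty$. If $M$ satisfies the $(SW_j)$ condition, then for all $t=0,1,\dots,\operatorname{pd}_R\mathcal S_j(M)$, $$\beta_t^R(\mathcal S_j(M))=\sum_{\substack{(a_0,\dots,a_p)\in\mathbb N^{p+1}\\ \sum a_i=j,\ \sum ia_i=t}}\ \prod_{\substack{0\le i\le p\\ i\text{ even}}}\binom{\beta_i^R(M)+a_i-1}{a_i}\prod_{\substack{0\le i\le p\\ i\text{ odd}}}\binom{\beta_i^R(M)}{a_i}$$ (for both parities of $p$).
   Context: $\beta_i^R(N)$ is the $i$-th Betti number (rank of the $i$-th module in a minimal free resolution of $N$). $\mathcal S_j(M)$ is the $j$-th graded component of the symmetric algebra $\mathcal S_R(M)$. For a free module $F$ of finite rank, $D_a(F)$ is the $a$-th divided power (symmetric tensors in $F^{\otimes a}$; free with basis the divided power monomials $f_1^{(c_1)}\cdots f_r^{(c_r)}$, $\sum c_l=a$), and $\Lambda^aF$ the $a$-th exterior power. For a finite free resolution $\mathbf F_\bullet:0\to F_p\xrightarrow{\phi_p}\cdots\xrightarrow{\phi_1}F_0$ of $M$, the complex $\mathcal S_j\mathbf F_\bullet$ has $(\mathcal S_j\mathbf F_\bullet)_t=\bigoplus D_{a_0}F_0\otimes\Lambda^{a_1}F_1\otimes D_{a_2}F_2\otimes\Lambda^{a_3}F_3\otimes\cdots$, summed over $(a_0,\dots,a_p)\in\mathbb N^{p+1}$ with $\sum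 a_i=j$, $\sum ia_i=t$; the differential maps the summand indexed by $(a_0,\dots,a_p)$ only to summands indexed by $(a_0,\dots,a_i+1,a_{i+1}-1,\dots,a_p)$, by $(-1)^{a_0+2a_1+\cdots+(i+1)a_i}$ times identity on other factors tensored with: for $i$ odd, $f_1^{(c_1)}\cdots f_r^{(c_r)}\otimes v\mapsto\sum_lf_1^{(c_1)}\cdots f_l^{(c_l-1)}\cdots f_r^{(c_r)}\otimes\phi_{i+1}(f_l)\wedge v$ ($D_aF_{i+1}\otimes\Lambda^bF_i\to D_{a-1}F_{i+1}\otimes\Lambda^{b+1}F_i$); for $i$ even, $f_{l_1}\wedge\cdots\wedge f_{l_a}\otimes w\mapsto\sum_s(-1)^sf_{l_1}\wedge\cdots\widehat{f_{l_s}}\cdots\wedge f_{l_a}\otimes\phi_{i+1}(f_{l_s})\cup w$ ($\Lambda^aF_{i+1}\otimes D_bF_i\to\Lambda^{a-1}F_{i+1}\otimes D_{b+1}F_i$), where $g_m\cup g_1^{(c_1)}\cdots g_n^{(c_n)}$ raises $c_m$ by one. Standing assumption: the characteristic of $R$ is such that $\mathcal S_j\mathbf F_\bullet$ is a complex (e.g. all integers $2\le m\le jp$ are units in $R$). A free resolution is minimal if $\operatorname{Im}\phi_i\subseteq\mathfrak mF_{i-1}$. $M$ satisfies the $(SW_j)$ condition ($j\ge2$) if, for a finite minimal free resolution $\mathbf F_\bullet$ of $M$, $\mathcal S_j\mathbf F_\bullet$ is a finite free resolution of $\mathcal S_j(M)$. *)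

theory Defs
  imports Main "HOL-Library.Multiset" "HOL-Library.Function_Algebras" "HOL-Library.Extended_Nat"
begin

definition is_ideal :: "'a::comm_ring_1 set \<Rightarrow> bool" where
  "is_ideal I \<longleftrightarrow> 0 \<in> I \<and> (\<forall>x\<in>I. \<forall>y\<in>I. x + y \<in> I) \<and> (\<forall>r x. x \<in> I \<longrightarrow> r * x \<in> I)"

definition ideal_gen :: "'a::comm_ring_1 list \<Rightarrow> 'a set" where
  "ideal_gen xs = {(\<Sum>i<length xs. r i * xs ! i) | r. True}"

definition noetherian_ring :: "'a::comm_ring_1 itself \<Rightarrow> bool" where
  "noetherian_ring _ \<longleftrightarrow> (\<forall>I::'a set. is_ideal I \<longrightarrow> (\<exists>xs. I = ideal_gen xs))"

definition local_ring_max :: "'a::comm_ring_1 set \<Rightarrow> bool" where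
  "local_ring_max m \<longleftrightarrow> is_ideal m \<and> m \<noteq> UNIV \<and> (\<forall>x. x \<notin> m \<longrightarrow> x dvd 1)"

definition fin_gen :: "('a::comm_ring_1 \<Rightarrow> 'm::ab_group_add \<Rightarrow> 'm) \<Rightarrow> bool" where
  "fin_gen s \<longleftrightarrow> module s \<and> (\<exists>S. finite S \<and> module.span s S = UNIV)"

section \<open>Free resolutions of a module A/K (A, K submodules of the module type 'b)\<close>

text \<open>Vectors of the free module with basis I (finitely supported on I).\<close>
definition vecs :: "'i set \<Rightarrow> ('i \<Rightarrow> 'a::zero) set" where
  "vecs I = {x. \<forall>i. i \<notin> I \<longrightarrow> x i = 0}"

definition matapp :: "'i set \<Rightarrow> 'i set \<Rightarrow> ('i \<Rightarrow> 'i \<Rightarrow> 'a::comm_ring_1) \<Rightarrow> ('i \<Rightarrow> 'a) \<Rightarrow> ('i \<Rightarrow> 'a)" where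
  "matapp I J D x = (\<lambda>i. if i \<in> I then (\<Sum>j\<in>J. D i j * x j) else 0)"

definition lincomb :: "('a \<Rightarrow> 'b \<Rightarrow> 'b) \<Rightarrow> 'i set \<Rightarrow> ('i \<Rightarrow> 'a) \<Rightarrow> ('i \<Rightarrow> 'b) \<Rightarrow> 'b::ab_group_add" where
  "lincomb s I x g = (\<Sum>i\<in>I. s (x i) (g i))"

definition subquot :: "('a::comm_ring_1 \<Rightarrow> 'b::ab_group_add \<Rightarrow> 'b) \<Rightarrow> 'b set \<Rightarrow> 'b set \<Rightarrow> bool" where
  "subquot s A K \<longleftrightarrow> module s \<and> module.subspace s A \<and> module.subspace s K \<and> K \<subseteq> A"

text \<open>(I, D, g) is a free resolution (by free modules of finite rank) of the module A/K:
  F_t is free with basis I t, the differential F_t \<rightarrow> F_(t-1) has matrix D t,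
  and the augmentation F_0 \<rightarrow> A/K sends the basis element i to the class of g i.\<close>
definition free_res :: "('a::comm_ring_1 \<Rightarrow> 'b::ab_group_add \<Rightarrow> 'b) \<Rightarrow> 'b set \<Rightarrow> 'b set
    \<Rightarrow> (nat \<Rightarrow> 'i set) \<Rightarrow> (nat \<Rightarrow> 'i \<Rightarrow> 'i \<Rightarrow> 'a) \<Rightarrow> ('i \<Rightarrow> 'b) \<Rightarrow> bool" where
  "free_res s A K I D g \<longleftrightarrow>
     subquot s A K \<and> (\<forall>t. finite (I t)) \<and> g ` I 0 \<subseteq> A \<and>
     (\<forall>a\<in>A. \<exists>x\<in>vecs (I 0). a - lincomb s (I 0) x g \<in> K) \<and>
     (\<forall>x\<in>vecs (I 0). lincomb s (I 0) x g \<in> K \<longleftrightarrow>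
        (\<exists>y\<in>vecs (I 1). x = matapp (I 0) (I 1) (D 1) y)) \<and>
     (\<forall>t\<ge>1. \<forall>x\<in>vecs (I t). matapp (I (t - 1)) (I t) (D t) x = 0 \<longleftrightarrow>
        (\<exists>y\<in>vecs (I (Suc t)). x = matapp (I t) (I (Suc t)) (D (Suc t)) y))"

text \<open>Minimality: Im d_t \<subseteq> m F_(t-1), i.e. all matrix entries lie in m.\<close>
definition minimal_res :: "'a::comm_ring_1 set \<Rightarrow> (nat \<Rightarrow> 'i set) \<Rightarrow> (nat \<Rightarrow> 'i \<Rightarrow> 'i \<Rightarrow> 'a) \<Rightarrow> bool" where
  "minimal_res m I D \<longleftrightarrow> (\<forall>t\<ge>1. \<forall>i\<in>I (t - 1). \<forall>j\<in>I t. D t i j \<in> m)"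

definition betti :: "'a::comm_ring_1 set \<Rightarrow> ('a \<Rightarrow> 'b::ab_group_add \<Rightarrow> 'b) \<Rightarrow> 'b set \<Rightarrow> 'b set \<Rightarrow> nat \<Rightarrow> nat" where
  "betti m s A K t = (THE n. \<exists>(I::nat \<Rightarrow> nat set) D g.
      free_res s A K I D g \<and> minimal_res m I D \<and> card (I t) = n)"

definition pdim :: "('a::comm_ring_1 \<Rightarrow> 'b::ab_group_add \<Rightarrow> 'b) \<Rightarrow> 'b set \<Rightarrow> 'b set \<Rightarrow> enat" where
  "pdim s A K = (if \<exists>n (I::nat \<Rightarrow> nat set) D g. free_res s A K I D g \<and> (\<forall>t>n. I t = {})
     then enat (LEAST n. \<exists>(I::nat \<Rightarrow> nat set) D g. free_res s A K I D g \<and> (\<forall>t>n. I t = {}))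
     else \<infinity>)"

text \<open>S_j(M) is the free module on the j-element multisets of M modulo the
  multilinearity relations; realised as the quotient symA / symK inside 'm multiset \<Rightarrow> 'a.\<close>
definition sym_scale :: "'a::comm_ring_1 \<Rightarrow> ('m multiset \<Rightarrow> 'a) \<Rightarrow> ('m multiset \<Rightarrow> 'a)" where
  "sym_scale r f = (\<lambda>X. r * f X)"

definition delta :: "'m multiset \<Rightarrow> 'm multiset \<Rightarrow> 'a::comm_ring_1" where
  "delta Y = (\<lambda>X. if X = Y then 1 else 0)"

definition symA :: "nat \<Rightarrow> ('m multiset \<Rightarrow> 'a::comm_ring_1) set" where
  "symA j = {f. finite {X. f X \<noteq> 0} \<and> (\<forall>X. f X \<noteq> 0 \<longrightarrow> size X = j)}"

definition symK :: "('a::comm_ring_1 \<Rightarrow> 'm::ab_group_add \<Rightarrow> 'm) \<Rightarrow> nat \<Rightarrow> ('m multiset \<Rightarrow> 'a) set" where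
  "symK s j = module.span sym_scale
     ({delta (add_mset (x + y) X) - delta (add_mset x X) - delta (add_mset y X) | x y X. size X = j - 1}
    \<union> {delta (add_mset (s r x) X) - sym_scale r (delta (add_mset x X)) | r x X. size X = j - 1})"

text \<open>Basis of (S_j F)_t for F of length q with bases I 0, ..., I q: lists xs of length q+1,
  xs!i a multiset over I i of size a_i (a divided power monomial for i even, a strictly
  increasing wedge product (a set) for i odd).\<close>
definition symI :: "nat \<Rightarrow> nat \<Rightarrow> (nat \<Rightarrow> nat set) \<Rightarrow> nat \<Rightarrow> nat multiset list set" where
  "symI j q I t = {xs. length xs = Suc q \<and>
      (\<forall>i\<le>q. set_mset (xs ! i) \<subseteq> I i \<and> (odd i \<longrightarrow> (\<forall>x. count (xs ! i) x \<le> 1))) \<and>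
      (\<Sum>i\<le>q. size (xs ! i)) = j \<and> (\<Sum>i\<le>q. i * size (xs ! i)) = t}"

text \<open>Coefficient of the basis element ys in the image of basis element xs under the
  component of the differential lowering a_(i+1) and raising a_i.\<close>
definition sym_comp :: "(nat \<Rightarrow> nat set) \<Rightarrow> (nat \<Rightarrow> nat \<Rightarrow> nat \<Rightarrow> 'a::comm_ring_1) \<Rightarrow> nat
    \<Rightarrow> nat multiset list \<Rightarrow> nat multiset list \<Rightarrow> 'a" where
  "sym_comp I D i ys xs =
    (if odd i then
       (\<Sum>l\<in>set_mset (xs ! Suc i). \<Sum>m\<in>I i.
          if m \<notin># xs ! i \<and> ys = xs[Suc i := xs ! Suc i - {#l#}, i := add_mset m (xs ! i)]
          then (-1) ^ card {k \<in> set_mset (xs ! i). k < m} * D (Suc i) m l else 0)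
     else
       (\<Sum>l\<in>set_mset (xs ! Suc i). \<Sum>m\<in>I i.
          if ys = xs[Suc i := xs ! Suc i - {#l#}, i := add_mset m (xs ! i)]
          then (-1) ^ Suc (card {k \<in> set_mset (xs ! Suc i). k < l}) * D (Suc i) m l else 0))"

definition symD :: "nat \<Rightarrow> (nat \<Rightarrow> nat set) \<Rightarrow> (nat \<Rightarrow> nat \<Rightarrow> nat \<Rightarrow> 'a::comm_ring_1)
    \<Rightarrow> nat multiset list \<Rightarrow> nat multiset list \<Rightarrow> 'a" where
  "symD q I D ys xs = (\<Sum>i<q. (-1) ^ (\<Sum>k\<le>i. Suc k * size (xs ! k)) * sym_comp I D i ys xs)"

definition SW :: "'a::comm_ring_1 set \<Rightarrow> ('a \<Rightarrow> 'm::ab_group_add \<Rightarrow> 'm) \<Rightarrow> nat \<Rightarrow> bool" where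
  "SW m s j \<longleftrightarrow> (\<exists>q (I::nat \<Rightarrow> nat set) D g.
      free_res s UNIV {0} I D g \<and> minimal_res m I D \<and> (\<forall>t>q. I t = {}) \<and>
      (\<exists>g'. free_res sym_scale (symA j) (symK s j) (symI j q I) (\<lambda>_. symD q I D) g'))"

end

theory Submission
  imports Defs "HOL-Library.Countable_Set"
begin

(* Betti numbers are the ranks of any minimal free resolution. If F is minimal and G is any
   resolution of the same module, lifts phi : F -> G and psi : G -> F of the identity make
   psi phi - 1 a chain map lifting zero, hence null-homotopic; as F is minimal, every term of
   the homotopy formula lies in m, so psi_t phi_t is the identity modulo m, and elimination over
   the local ring gives rank F_t <= rank G_t.
   Under (SW_j) the complex S_j F of a minimal resolution F of M resolves S_j(M), and it is
   again minimal because every entry of its differential is a signed sum of entries of the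
   differentials of F. Hence beta_t(S_j M) is the rank of (S_j F)_t, a count of tuples of
   divided power monomials of degree a_i in F_i (i even) and exterior monomials of degree a_i
   in F_i (i odd): this is the sum of binomial products. Finally F vanishes above pd M, its ranks
   being bounded by those of a shortest resolution. *)

section \<open>Matrices modulo the maximal ideal of a local ring\<close>

lemma ideal_zero: "is_ideal m \<Longrightarrow> 0 \<in> m"
  by (simp add: is_ideal_def)

lemma ideal_add: "is_ideal m \<Longrightarrow> x \<in> m \<Longrightarrow> y \<in> m \<Longrightarrow> x + y \<in> m"
  by (simp add: is_ideal_def)

lemma ideal_mult_left: "is_ideal m \<Longrightarrow> x \<in> m \<Longrightarrow> r * x \<in> m"
  by (simp add: is_ideal_def)

lemma ideal_mult_right: "is_ideal m \<Longrightarrow> x \<in> m \<Longrightarrow> x * r \<in> m"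
  by (metis ideal_mult_left mult.commute)

lemma ideal_uminus: "is_ideal m \<Longrightarrow> x \<in> m \<Longrightarrow> - x \<in> m"
  using ideal_mult_left[of m x "- 1"] by simp

lemma ideal_diff: "is_ideal m \<Longrightarrow> x \<in> m \<Longrightarrow> y \<in> m \<Longrightarrow> x - y \<in> m"
  using ideal_add[of m x "- y"] ideal_uminus[of m y] by simp

lemma ideal_sum: "is_ideal m \<Longrightarrow> (\<And>i. i \<in> S \<Longrightarrow> f i \<in> m) \<Longrightarrow> sum f S \<in> m"
  by (induction S rule: infinite_finite_induct) (auto simp: ideal_zero ideal_add)

lemma local_ring_max_ideal: "local_ring_max m \<Longrightarrow> is_ideal m"
  by (simp add: local_ring_max_def)

lemma local_ring_max_one_notin: "local_ring_max m \<Longrightarrow> 1 \<notin> m"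
  unfolding local_ring_max_def is_ideal_def by (metis UNIV_eq_I mult.right_neutral)

lemma local_ring_max_unit: "local_ring_max m \<Longrightarrow> x \<notin> m \<Longrightarrow> x dvd 1"
  by (simp add: local_ring_max_def)

definition matmul :: "'k set \<Rightarrow> ('i \<Rightarrow> 'k \<Rightarrow> 'a::comm_ring_1) \<Rightarrow> ('k \<Rightarrow> 'j \<Rightarrow> 'a) \<Rightarrow> 'i \<Rightarrow> 'j \<Rightarrow> 'a" where
  "matmul Y M N a c = (\<Sum>b\<in>Y. M a b * N b c)"

lemma matmul_assoc:
  "finite X \<Longrightarrow> finite Y \<Longrightarrow> matmul Y (matmul X M N) P a c = matmul X M (matmul Y N P) a c"
  unfolding matmul_def by (simp add: sum_distrib_left sum_distrib_right mult.assoc sum.swap[of _ Y X])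

lemma matmul_cong:
  "(\<And>b. b \<in> Y \<Longrightarrow> M a b * N b c = M' a b * N' b c) \<Longrightarrow> matmul Y M N a c = matmul Y M' N' a c"
  unfolding matmul_def by (rule sum.cong) auto

lemma matmul_diff_right:
  "matmul Y M (\<lambda>b c. N b c - N' b c) a c = matmul Y M N a c - matmul Y M N' a c"
  unfolding matmul_def by (simp add: right_diff_distrib sum_subtractf)

lemma matmul_diff_left:
  "matmul Y (\<lambda>a b. M a b - M' a b) N a c = matmul Y M N a c - matmul Y M' N a c"
  unfolding matmul_def by (simp add: left_diff_distrib sum_subtractf)

lemma matmul_diff_id_right:
  "finite X \<Longrightarrow> c \<in> X \<Longrightarrow> matmul X M (\<lambda>b c. N b c - (if b = c then 1 else 0)) a c = matmul X M N a c - M a c"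
  unfolding matmul_def by (simp add: right_diff_distrib sum_subtractf if_distrib[of "\<lambda>x. _ * x"] cong: if_cong)

lemma matmul_diff_id_left:
  "finite X \<Longrightarrow> a \<in> X \<Longrightarrow> matmul X (\<lambda>a b. N a b - (if a = b then 1 else 0)) M a c = matmul X N M a c - M a c"
  unfolding matmul_def by (simp add: left_diff_distrib sum_subtractf if_distrib[of "\<lambda>x. x * _"] cong: if_cong)

text \<open>Gaussian elimination: if \<open>B A\<close> is the identity modulo \<open>m\<close>, some entry of each column of
  \<open>A\<close> is a unit, and pivoting on it removes one row and one column.\<close>

lemma unit_pivotE:
  assumes m: "local_ring_max m" and "matmul Y B A x x - 1 \<in> m"
  obtains y where "y \<in> Y" "A y x dvd 1"
proof -
  have mI: "is_ideal m"
    using m by (rule local_ring_max_ideal)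
  have "matmul Y B A x x \<notin> m"
  proof
    assume "matmul Y B A x x \<in> m"
    then have "matmul Y B A x x - (matmul Y B A x x - 1) \<in> m"
      using assms(2) by (rule ideal_diff[OF mI])
    then show False
      using local_ring_max_one_notin[OF m] by simp
  qed
  then obtain y where "y \<in> Y" "B x y * A y x \<notin> m"
    unfolding matmul_def by (metis (no_types, lifting) ideal_sum[OF mI])
  then show thesis
    using that ideal_mult_left[OF mI] local_ring_max_unit[OF m] by blast
qed

lemma matmul_pivot:
  assumes "finite Y" "y\<^sub>0 \<in> Y" "A y\<^sub>0 x\<^sub>0 * v = 1"
  shows "matmul (Y - {y\<^sub>0}) B (\<lambda>y x. A y x - A y x\<^sub>0 * v * A y\<^sub>0 x) a b
    = matmul Y B A a b - matmul Y B A a x\<^sub>0 * (v * A y\<^sub>0 b)"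
proof -
  let ?A' = "\<lambda>y x. A y x - A y x\<^sub>0 * v * A y\<^sub>0 x"
  have "?A' y\<^sub>0 b = 0"
    using assms(3) by simp
  then have "matmul (Y - {y\<^sub>0}) B ?A' a b = matmul Y B ?A' a b"
    using assms(1,2) by (simp add: matmul_def sum.remove)
  also have "\<dots> = (\<Sum>y\<in>Y. B a y * A y b - B a y * A y x\<^sub>0 * (v * A y\<^sub>0 b))"
    unfolding matmul_def by (rule sum.cong) (simp_all add: right_diff_distrib mult.assoc)
  also have "\<dots> = matmul Y B A a b - matmul Y B A a x\<^sub>0 * (v * A y\<^sub>0 b)"
    by (simp add: matmul_def sum_subtractf sum_distrib_right)
  finally show ?thesis .
qed

lemma inverse_mod_pivot:
  assumes mI: "is_ideal m" and "finite Y" "x\<^sub>0 \<in> X" "y\<^sub>0 \<in> Y" "A y\<^sub>0 x\<^sub>0 * v = 1"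
    and inv: "\<forall>a\<in>X. \<forall>b\<in>X. matmul Y B A a b - (if a = b then 1 else 0) \<in> m"
  shows "\<forall>a\<in>X - {x\<^sub>0}. \<forall>b\<in>X - {x\<^sub>0}.
    matmul (Y - {y\<^sub>0}) B (\<lambda>y x. A y x - A y x\<^sub>0 * v * A y\<^sub>0 x) a b - (if a = b then 1 else 0) \<in> m"
proof (intro ballI)
  fix a b assume ab: "a \<in> X - {x\<^sub>0}" "b \<in> X - {x\<^sub>0}"
  have "matmul (Y - {y\<^sub>0}) B (\<lambda>y x. A y x - A y x\<^sub>0 * v * A y\<^sub>0 x) a b - (if a = b then 1 else 0)
      = (matmul Y B A a b - (if a = b then 1 else 0)) - matmul Y B A a x\<^sub>0 * (v * A y\<^sub>0 b)"
    unfolding matmul_pivot[where A = A, OF assms(2,4,5)] by (simp only: diff_diff_eq add.commute)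
  also have "\<dots> \<in> m"
  proof (rule ideal_diff[OF mI])
    show "matmul Y B A a b - (if a = b then 1 else 0) \<in> m"
      using inv ab by blast
    have "matmul Y B A a x\<^sub>0 \<in> m"
      using inv ab assms(3) by force
    then show "matmul Y B A a x\<^sub>0 * (v * A y\<^sub>0 b) \<in> m"
      by (rule ideal_mult_right[OF mI])
  qed
  finally show "matmul (Y - {y\<^sub>0}) B (\<lambda>y x. A y x - A y x\<^sub>0 * v * A y\<^sub>0 x) a b - (if a = b then 1 else 0) \<in> m" .
qed

lemma card_le_of_inverse_mod_max_ideal:
  fixes A :: "'j \<Rightarrow> 'i \<Rightarrow> 'a::comm_ring_1" and B :: "'i \<Rightarrow> 'j \<Rightarrow> 'a"
  assumes m: "local_ring_max m" and "finite X" "finite Y"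
    and "\<forall>a\<in>X. \<forall>b\<in>X. matmul Y B A a b - (if a = b then 1 else 0) \<in> m"
  shows "card X \<le> card Y"
  using assms(2-)
proof (induction "card X" arbitrary: X Y A)
  case (Suc n)
  obtain x\<^sub>0 where x\<^sub>0: "x\<^sub>0 \<in> X"
    using Suc.hyps(2) by (metis card_eq_SucD insertI1)
  have "matmul Y B A x\<^sub>0 x\<^sub>0 - 1 \<in> m"
    using Suc.prems(3) x\<^sub>0 by force
  then obtain y\<^sub>0 where y\<^sub>0: "y\<^sub>0 \<in> Y" "A y\<^sub>0 x\<^sub>0 dvd 1"
    by (rule unit_pivotE[OF m])
  then obtain v where v: "A y\<^sub>0 x\<^sub>0 * v = 1"
    by (metis dvdE)
  have "card (X - {x\<^sub>0}) \<le> card (Y - {y\<^sub>0})"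
    using Suc.hyps(2) Suc.prems x\<^sub>0 y\<^sub>0(1)
      inverse_mod_pivot[OF local_ring_max_ideal[OF m] Suc.prems(2) x\<^sub>0 y\<^sub>0(1) v Suc.prems(3)]
    by (intro Suc.hyps(1)[where A = "\<lambda>y x. A y x - A y x\<^sub>0 * v * A y\<^sub>0 x"]) auto
  moreover have "card Y > 0"
    using Suc.prems(2) y\<^sub>0(1) card_gt_0_iff by blast
  ultimately show ?case
    using Suc.prems(1,2) Suc.hyps(2) x\<^sub>0 y\<^sub>0(1) by (simp add: card_Diff_singleton)
qed simp

section \<open>Cycles and boundaries of a free resolution\<close>

lemma lincomb_restrict: "lincomb s X (\<lambda>b. if b \<in> X then v b else 0) h = lincomb s X v h"
  unfolding lincomb_def by (rule sum.cong) auto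

lemma lincomb_matmul:
  assumes s: "module s" and "finite X"
  shows "lincomb s Y (\<lambda>b. matmul X M N b i) h = (\<Sum>a\<in>X. s (N a i) (lincomb s Y (\<lambda>b. M b a) h))"
proof -
  have "s (\<Sum>a\<in>X. M b a * N a i) (h b) = (\<Sum>a\<in>X. s (N a i) (s (M b a) (h b)))" for b
    unfolding module.scale_sum_left[OF s]
    by (rule sum.cong[OF refl]) (simp add: module.scale_scale[OF s] mult.commute)
  then have "lincomb s Y (\<lambda>b. matmul X M N b i) h = (\<Sum>b\<in>Y. \<Sum>a\<in>X. s (N a i) (s (M b a) (h b)))"
    unfolding lincomb_def matmul_def by (rule sum.cong[OF refl])
  also have "\<dots> = (\<Sum>a\<in>X. s (N a i) (lincomb s Y (\<lambda>b. M b a) h))"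
    unfolding lincomb_def module.scale_sum_right[OF s] by (rule sum.swap)
  finally show ?thesis .
qed

lemma lincomb_diff:
  "module s \<Longrightarrow> lincomb s X (\<lambda>b. u b - w b) g = lincomb s X u g - lincomb s X w g"
  unfolding lincomb_def by (simp add: module.scale_left_diff_distrib sum_subtractf)

lemma lincomb_id_column:
  assumes s: "module s" and "finite X" "i \<in> X"
  shows "lincomb s X (\<lambda>b. if b = i then 1 else 0) g = g i"
  unfolding lincomb_def using assms
  by (simp add: if_distrib[of "\<lambda>x. s x _"] module.scale_zero_left[OF s] module.scale_one[OF s] cong: if_cong)

lemma scaled_sum_diff_in_subspace:
  assumes "module s" "module.subspace s K" "\<And>a. a \<in> X \<Longrightarrow> u a - w a \<in> K"
  shows "(\<Sum>a\<in>X. s (c a) (u a)) - (\<Sum>a\<in>X. s (c a) (w a)) \<in> K"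
proof -
  have "(\<Sum>a\<in>X. s (c a) (u a)) - (\<Sum>a\<in>X. s (c a) (w a)) = (\<Sum>a\<in>X. s (c a) (u a - w a))"
    by (simp add: sum_subtractf module.scale_right_diff_distrib[OF assms(1)])
  also have "\<dots> \<in> K"
    by (rule module.subspace_sum[OF assms(1,2)], rule module.subspace_scale[OF assms(1,2)], rule assms(3))
  finally show ?thesis .
qed

text \<open>Unlike in
  \<^const>\<open>free_res\<close>, vectors are not required to vanish outside the basis.\<close>

fun res_cycle :: "('a::comm_ring_1 \<Rightarrow> 'b::ab_group_add \<Rightarrow> 'b) \<Rightarrow> 'b set \<Rightarrow> (nat \<Rightarrow> 'i set)
    \<Rightarrow> (nat \<Rightarrow> 'i \<Rightarrow> 'i \<Rightarrow> 'a) \<Rightarrow> ('i \<Rightarrow> 'b) \<Rightarrow> nat \<Rightarrow> ('i \<Rightarrow> 'a) \<Rightarrow> bool" where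
  "res_cycle s K I D g 0 v \<longleftrightarrow> lincomb s (I 0) v g \<in> K"
| "res_cycle s K I D g (Suc t) v \<longleftrightarrow> (\<forall>a\<in>I t. (\<Sum>b\<in>I (Suc t). D (Suc t) a b * v b) = 0)"

text \<open>A preimage under \<open>D (Suc t)\<close> of every column of \<open>M\<close>; junk for columns that are not cycles.\<close>

definition lift_boundary :: "(nat \<Rightarrow> 'i set) \<Rightarrow> (nat \<Rightarrow> 'i \<Rightarrow> 'i \<Rightarrow> 'a::comm_ring_1) \<Rightarrow> nat
    \<Rightarrow> ('i \<Rightarrow> 'k \<Rightarrow> 'a) \<Rightarrow> 'i \<Rightarrow> 'k \<Rightarrow> 'a" where
  "lift_boundary I D t M = (\<lambda>b c. (SOME y. \<forall>a\<in>I t. M a c = (\<Sum>b\<in>I (Suc t). D (Suc t) a b * y b)) b)"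

context
  fixes s :: "'a::comm_ring_1 \<Rightarrow> 'b::ab_group_add \<Rightarrow> 'b" and A K and I :: "nat \<Rightarrow> 'i set" and D g
  assumes res: "free_res s A K I D g"
begin

lemma free_res_finite: "finite (I t)"
  using res by (simp add: free_res_def)

lemma free_res_module: "module s"
  using res by (simp add: free_res_def subquot_def)

lemma free_res_subspace: "module.subspace s K"
  using res by (simp add: free_res_def subquot_def)

lemma free_res_exact:
  assumes "x \<in> vecs (I t)"
  shows "res_cycle s K I D g t x \<longleftrightarrow> (\<exists>y\<in>vecs (I (Suc t)). x = matapp (I t) (I (Suc t)) (D (Suc t)) y)"
proof (cases t)
  case 0
  then show ?thesis
    using res assms by (simp add: free_res_def)
next
  case (Suc t')
  have "\<forall>t\<ge>1. \<forall>x\<in>vecs (I t). matapp (I (t - 1)) (I t) (D t) x = 0 \<longleftrightarrow>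
      (\<exists>y\<in>vecs (I (Suc t)). x = matapp (I t) (I (Suc t)) (D (Suc t)) y)"
    using res unfolding free_res_def by blast
  moreover have "res_cycle s K I D g t x \<longleftrightarrow> matapp (I (t - 1)) (I t) (D t) x = 0"
    by (simp add: Suc matapp_def fun_eq_iff Ball_def)
  ultimately show ?thesis
    using assms Suc by (metis le_add1 plus_1_eq_Suc)
qed

lemma res_cycle_is_boundary:
  assumes "res_cycle s K I D g t v"
  shows "\<exists>y. \<forall>a\<in>I t. v a = (\<Sum>b\<in>I (Suc t). D (Suc t) a b * y b)"
proof -
  let ?x = "\<lambda>b. if b \<in> I t then v b else 0"
  have "res_cycle s K I D g t ?x"
    using assms by (cases t) (simp_all add: lincomb_restrict)
  moreover have "?x \<in> vecs (I t)"
    by (simp add: vecs_def)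
  ultimately obtain y where y: "?x = matapp (I t) (I (Suc t)) (D (Suc t)) y"
    using free_res_exact by blast
  have "v a = (\<Sum>b\<in>I (Suc t). D (Suc t) a b * y b)" if "a \<in> I t" for a
    using fun_cong[OF y, of a] that by (simp add: matapp_def)
  then show ?thesis
    by blast
qed

lemma res_boundary_is_cycle:
  assumes "c \<in> I (Suc t)"
  shows "res_cycle s K I D g t (\<lambda>a. D (Suc t) a c)"
proof -
  let ?e = "\<lambda>b. if b = c then 1 else 0"
  have "?e \<in> vecs (I (Suc t))"
    using assms by (simp add: vecs_def)
  moreover have "matapp (I t) (I (Suc t)) (D (Suc t)) ?e \<in> vecs (I t)"
    by (simp add: matapp_def vecs_def)
  ultimately have "res_cycle s K I D g t (matapp (I t) (I (Suc t)) (D (Suc t)) ?e)"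
    using free_res_exact by blast
  moreover have "matapp (I t) (I (Suc t)) (D (Suc t)) ?e = (\<lambda>a. if a \<in> I t then D (Suc t) a c else 0)"
    using assms free_res_finite
    by (simp add: matapp_def fun_eq_iff if_distrib[of "\<lambda>x. _ * x"] cong: if_cong)
  ultimately show ?thesis
    by (cases t) (simp_all add: lincomb_restrict)
qed

lemma res_dd_zero:
  "a \<in> I t \<Longrightarrow> c \<in> I (Suc (Suc t)) \<Longrightarrow> matmul (I (Suc t)) (D (Suc t)) (D (Suc (Suc t))) a c = 0"
  using res_boundary_is_cycle[of c "Suc t"] by (simp add: matmul_def)

lemma matmul_lift_boundary:
  assumes "res_cycle s K I D g t (\<lambda>a. M a c)" "a \<in> I t"
  shows "matmul (I (Suc t)) (D (Suc t)) (lift_boundary I D t M) a c = M a c"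
  using someI_ex[OF res_cycle_is_boundary[OF assms(1)]] assms(2)
  by (simp add: matmul_def lift_boundary_def)

end

section \<open>Comparison of free resolutions\<close>

text \<open>Matrices are indexed (row, column), so \<open>\<Phi> t :: 'j \<Rightarrow> 'i \<Rightarrow> 'a\<close> maps \<open>F\<^sub>t\<close> (basis \<open>I t\<close>)
  to \<open>G\<^sub>t\<close> (basis \<open>J t\<close>).\<close>

definition chain_map :: "('a::comm_ring_1 \<Rightarrow> 'b::ab_group_add \<Rightarrow> 'b) \<Rightarrow> 'b set
    \<Rightarrow> (nat \<Rightarrow> 'i set) \<Rightarrow> (nat \<Rightarrow> 'i \<Rightarrow> 'i \<Rightarrow> 'a) \<Rightarrow> ('i \<Rightarrow> 'b)
    \<Rightarrow> (nat \<Rightarrow> 'j set) \<Rightarrow> (nat \<Rightarrow> 'j \<Rightarrow> 'j \<Rightarrow> 'a) \<Rightarrow> ('j \<Rightarrow> 'b) \<Rightarrow> (nat \<Rightarrow> 'j \<Rightarrow> 'i \<Rightarrow> 'a) \<Rightarrow> bool" where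
  "chain_map s K I D g J E h \<Phi> \<longleftrightarrow>
     (\<forall>i\<in>I 0. g i - lincomb s (J 0) (\<lambda>b. \<Phi> 0 b i) h \<in> K) \<and>
     (\<forall>t. \<forall>i\<in>I (Suc t). \<forall>a\<in>J t.
        matmul (J (Suc t)) (E (Suc t)) (\<Phi> (Suc t)) a i = matmul (I t) (\<Phi> t) (D (Suc t)) a i)"

primrec comparison_map :: "('a::comm_ring_1 \<Rightarrow> 'b::ab_group_add \<Rightarrow> 'b) \<Rightarrow> 'b set
    \<Rightarrow> (nat \<Rightarrow> 'i set) \<Rightarrow> (nat \<Rightarrow> 'i \<Rightarrow> 'i \<Rightarrow> 'a) \<Rightarrow> ('i \<Rightarrow> 'b)
    \<Rightarrow> (nat \<Rightarrow> 'j set) \<Rightarrow> (nat \<Rightarrow> 'j \<Rightarrow> 'j \<Rightarrow> 'a) \<Rightarrow> ('j \<Rightarrow> 'b) \<Rightarrow> nat \<Rightarrow> 'j \<Rightarrow> 'i \<Rightarrow> 'a" where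
  "comparison_map s K I D g J E h 0 = (\<lambda>b i. (SOME x. g i - lincomb s (J 0) x h \<in> K) b)"
| "comparison_map s K I D g J E h (Suc t) =
     lift_boundary J E t (matmul (I t) (comparison_map s K I D g J E h t) (D (Suc t)))"

lemma res_cycle_0_image_boundary:
  assumes F: "free_res s A K I D g"
    and \<Phi>: "\<forall>i\<in>I 0. g i - lincomb s (J 0) (\<lambda>b. \<Phi> 0 b i) h \<in> K"
    and i: "i \<in> I (Suc 0)"
  shows "res_cycle s K J E h 0 (\<lambda>b. matmul (I 0) (\<Phi> 0) (D (Suc 0)) b i)"
proof -
  have ms: "module s" and sK: "module.subspace s K"
    using F by (rule free_res_module, rule free_res_subspace)
  have "lincomb s (I 0) (\<lambda>a. D (Suc 0) a i) g \<in> K"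
    using res_boundary_is_cycle[OF F i] by simp
  moreover have "lincomb s (I 0) (\<lambda>a. D (Suc 0) a i) g
      - lincomb s (J 0) (\<lambda>b. matmul (I 0) (\<Phi> 0) (D (Suc 0)) b i) h \<in> K"
    unfolding lincomb_matmul[OF ms free_res_finite[OF F]]
    unfolding lincomb_def by (rule scaled_sum_diff_in_subspace[OF ms sK]) (use \<Phi> in \<open>auto simp: lincomb_def\<close>)
  ultimately show ?thesis
    using module.subspace_diff[OF ms sK] by fastforce
qed

lemma comparison_map_0:
  assumes F: "free_res s A K I D g" and G: "free_res s A K J E h" and "i \<in> I 0"
  shows "g i - lincomb s (J 0) (\<lambda>b. comparison_map s K I D g J E h 0 b i) h \<in> K"
proof -
  have "g i \<in> A"
    using F assms(3) by (auto simp: free_res_def)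
  then have "\<exists>x. g i - lincomb s (J 0) x h \<in> K"
    using G by (auto simp: free_res_def)
  from someI_ex[OF this] show ?thesis
    by simp
qed

lemma chain_map_comparison_map:
  assumes F: "free_res s A K I D g" and G: "free_res s A K J E h"
  shows "chain_map s K I D g J E h (comparison_map s K I D g J E h)"
proof -
  let ?\<Phi> = "comparison_map s K I D g J E h"
  have aug: "g i - lincomb s (J 0) (\<lambda>b. ?\<Phi> 0 b i) h \<in> K" if "i \<in> I 0" for i
    using comparison_map_0[OF F G that] .
  have cycle: "\<forall>i\<in>I (Suc t). res_cycle s K J E h t (\<lambda>b. matmul (I t) (?\<Phi> t) (D (Suc t)) b i)" for t
  proof (induction t)
    case 0
    show ?case
      using res_cycle_0_image_boundary[OF F] aug by blast
  next
    case (Suc t)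
    have "matmul (J (Suc t)) (E (Suc t)) (matmul (I (Suc t)) (?\<Phi> (Suc t)) (D (Suc (Suc t)))) a i = 0"
      if a: "a \<in> J t" and i: "i \<in> I (Suc (Suc t))" for a i
    proof -
      have "matmul (J (Suc t)) (E (Suc t)) (matmul (I (Suc t)) (?\<Phi> (Suc t)) (D (Suc (Suc t)))) a i
          = matmul (I (Suc t)) (matmul (J (Suc t)) (E (Suc t)) (?\<Phi> (Suc t))) (D (Suc (Suc t))) a i"
        using free_res_finite[OF F] free_res_finite[OF G] by (simp add: matmul_assoc)
      also have "\<dots> = matmul (I (Suc t)) (matmul (I t) (?\<Phi> t) (D (Suc t))) (D (Suc (Suc t))) a i"
        using Suc.IH a by (intro matmul_cong) (simp add: matmul_lift_boundary[OF G])
      also have "\<dots> = matmul (I t) (?\<Phi> t) (matmul (I (Suc t)) (D (Suc t)) (D (Suc (Suc t)))) a i"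
        using free_res_finite[OF F] by (simp add: matmul_assoc)
      also have "\<dots> = 0"
        using res_dd_zero[OF F _ i] by (simp add: matmul_def)
      finally show ?thesis .
    qed
    then show ?case
      by (simp add: matmul_def)
  qed
  show ?thesis
    unfolding chain_map_def using aug cycle by (simp add: matmul_lift_boundary[OF G])
qed

definition chain_lift_of_zero :: "('a::comm_ring_1 \<Rightarrow> 'b::ab_group_add \<Rightarrow> 'b) \<Rightarrow> 'b set
    \<Rightarrow> (nat \<Rightarrow> 'i set) \<Rightarrow> (nat \<Rightarrow> 'i \<Rightarrow> 'i \<Rightarrow> 'a) \<Rightarrow> ('i \<Rightarrow> 'b) \<Rightarrow> (nat \<Rightarrow> 'i \<Rightarrow> 'i \<Rightarrow> 'a) \<Rightarrow> bool" where
  "chain_lift_of_zero s K I D g X \<longleftrightarrow>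
     (\<forall>i\<in>I 0. lincomb s (I 0) (\<lambda>b. X 0 b i) g \<in> K) \<and>
     (\<forall>t. \<forall>i\<in>I (Suc t). \<forall>a\<in>I t.
        matmul (I (Suc t)) (D (Suc t)) (X (Suc t)) a i = matmul (I t) (X t) (D (Suc t)) a i)"

lemma lincomb_comp_minus_id:
  assumes F: "free_res s A K I D g" and G: "free_res s A K J E h"
    and \<phi>: "chain_map s K I D g J E h \<phi>" and \<psi>: "chain_map s K J E h I D g \<psi>" and i: "i \<in> I 0"
  shows "lincomb s (I 0) (\<lambda>b. matmul (J 0) (\<psi> 0) (\<phi> 0) b i - (if b = i then 1 else 0)) g \<in> K"
proof -
  have ms: "module s" and sK: "module.subspace s K"
    using F by (rule free_res_module, rule free_res_subspace)
  let ?T = "\<Sum>c\<in>J 0. s (\<phi> 0 c i) (h c)"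
  have "?T - lincomb s (I 0) (\<lambda>b. matmul (J 0) (\<psi> 0) (\<phi> 0) b i) g \<in> K"
    unfolding lincomb_matmul[OF ms free_res_finite[OF G]]
    by (rule scaled_sum_diff_in_subspace[OF ms sK]) (use \<psi> in \<open>auto simp: chain_map_def\<close>)
  moreover have "g i - ?T \<in> K"
    using \<phi> i by (auto simp: chain_map_def lincomb_def)
  ultimately have "- ((?T - lincomb s (I 0) (\<lambda>b. matmul (J 0) (\<psi> 0) (\<phi> 0) b i) g) + (g i - ?T)) \<in> K"
    by (intro module.subspace_neg[OF ms sK] module.subspace_add[OF ms sK])
  then show ?thesis
    by (simp add: lincomb_diff[OF ms] lincomb_id_column[OF ms free_res_finite[OF F] i])
qed

lemma chain_map_comp:
  assumes F: "free_res s A K I D g" and G: "free_res s A K J E h"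
    and \<phi>: "chain_map s K I D g J E h \<phi>" and \<psi>: "chain_map s K J E h I D g \<psi>"
    and i: "i \<in> I (Suc t)" and a: "a \<in> I t"
  shows "matmul (I (Suc t)) (D (Suc t)) (matmul (J (Suc t)) (\<psi> (Suc t)) (\<phi> (Suc t))) a i
    = matmul (I t) (matmul (J t) (\<psi> t) (\<phi> t)) (D (Suc t)) a i"
proof -
  have fI: "finite (I t)" and fJ: "finite (J t)" for t
    using free_res_finite[OF F] free_res_finite[OF G] by auto
  have "matmul (I (Suc t)) (D (Suc t)) (matmul (J (Suc t)) (\<psi> (Suc t)) (\<phi> (Suc t))) a i
      = matmul (J (Suc t)) (matmul (I (Suc t)) (D (Suc t)) (\<psi> (Suc t))) (\<phi> (Suc t)) a i"
    by (simp add: matmul_assoc fI fJ)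
  also have "\<dots> = matmul (J (Suc t)) (matmul (J t) (\<psi> t) (E (Suc t))) (\<phi> (Suc t)) a i"
    using \<psi> a by (intro matmul_cong) (simp add: chain_map_def)
  also have "\<dots> = matmul (J t) (\<psi> t) (matmul (J (Suc t)) (E (Suc t)) (\<phi> (Suc t))) a i"
    by (simp add: matmul_assoc fJ)
  also have "\<dots> = matmul (J t) (\<psi> t) (matmul (I t) (\<phi> t) (D (Suc t))) a i"
    using \<phi> i by (intro matmul_cong) (simp add: chain_map_def)
  also have "\<dots> = matmul (I t) (matmul (J t) (\<psi> t) (\<phi> t)) (D (Suc t)) a i"
    by (simp add: matmul_assoc fI fJ)
  finally show ?thesis .
qed

lemma chain_lift_of_zero_comp_minus_id:
  assumes F: "free_res s A K I D g" and G: "free_res s A K J E h"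
    and \<phi>: "chain_map s K I D g J E h \<phi>" and \<psi>: "chain_map s K J E h I D g \<psi>"
  shows "chain_lift_of_zero s K I D g (\<lambda>t b i. matmul (J t) (\<psi> t) (\<phi> t) b i - (if b = i then 1 else 0))"
  unfolding chain_lift_of_zero_def
  using lincomb_comp_minus_id[OF assms] chain_map_comp[OF assms] free_res_finite[OF F]
  by (simp add: matmul_diff_id_right matmul_diff_id_left)

text \<open>The homotopy \<open>X\<^sub>t = D\<^sub>t\<^sub>+\<^sub>1 H\<^sub>t + H\<^sub>t\<^sub>-\<^sub>1 D\<^sub>t\<close>, obtained degree by degree by lifting
  the cycles \<open>X\<^sub>t - H\<^sub>t\<^sub>-\<^sub>1 D\<^sub>t\<close>.\<close>

primrec null_homotopy :: "(nat \<Rightarrow> 'i set) \<Rightarrow> (nat \<Rightarrow> 'i \<Rightarrow> 'i \<Rightarrow> 'a::comm_ring_1)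
    \<Rightarrow> (nat \<Rightarrow> 'i \<Rightarrow> 'i \<Rightarrow> 'a) \<Rightarrow> nat \<Rightarrow> 'i \<Rightarrow> 'i \<Rightarrow> 'a" where
  "null_homotopy I D X 0 = lift_boundary I D 0 (X 0)"
| "null_homotopy I D X (Suc t) =
     lift_boundary I D (Suc t) (\<lambda>a i. X (Suc t) a i - matmul (I t) (null_homotopy I D X t) (D (Suc t)) a i)"

lemma null_homotopy_eq:
  assumes F: "free_res s A K I D g" and X: "chain_lift_of_zero s K I D g X"
    and "a \<in> I t" "i \<in> I t"
  shows "X t a i = matmul (I (Suc t)) (D (Suc t)) (null_homotopy I D X t) a i
    + (case t of 0 \<Rightarrow> 0 | Suc t' \<Rightarrow> matmul (I t') (null_homotopy I D X t') (D t) a i)"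
proof -
  let ?H = "null_homotopy I D X"
  let ?P = "\<lambda>t a i. case t of 0 \<Rightarrow> 0 | Suc t' \<Rightarrow> matmul (I t') (?H t') (D t) a i"
  have fI: "finite (I t)" for t
    by (rule free_res_finite[OF F])
  have H: "?H t = lift_boundary I D t (\<lambda>a i. X t a i - ?P t a i)" for t
    by (cases t) simp_all
  have "\<forall>i\<in>I t. res_cycle s K I D g t (\<lambda>a. X t a i - ?P t a i)" for t
  proof (induction t)
    case 0
    then show ?case
      using X by (simp add: chain_lift_of_zero_def)
  next
    case (Suc t)
    have "matmul (I (Suc t)) (D (Suc t)) (\<lambda>a i. X (Suc t) a i - matmul (I t) (?H t) (D (Suc t)) a i) a i = 0"
      if a: "a \<in> I t" and i: "i \<in> I (Suc t)" for a i
    proof -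
      have "matmul (I (Suc t)) (D (Suc t)) (\<lambda>a i. X (Suc t) a i - matmul (I t) (?H t) (D (Suc t)) a i) a i
          = matmul (I t) (X t) (D (Suc t)) a i - matmul (I t) (matmul (I (Suc t)) (D (Suc t)) (?H t)) (D (Suc t)) a i"
        using X a i by (simp add: matmul_diff_right chain_lift_of_zero_def matmul_assoc fI)
      also have "\<dots> = matmul (I t) (?P t) (D (Suc t)) a i"
        unfolding matmul_diff_left[symmetric] using Suc.IH a
        by (intro matmul_cong) (simp add: H[of t] matmul_lift_boundary[OF F])
      also have "\<dots> = 0"
      proof (cases t)
        case (Suc t')
        then show ?thesis
          using res_dd_zero[OF F _ i[unfolded Suc]] by (simp add: matmul_assoc fI) (simp add: matmul_def)
      qed (simp add: matmul_def)
      finally show ?thesis .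
    qed
    then show ?case
      by (simp add: matmul_def)
  qed
  then show ?thesis
    using assms(3,4) H[of t] matmul_lift_boundary[OF F, of t "\<lambda>a i. X t a i - ?P t a i"] by simp
qed

lemma minimal_resD: "minimal_res m I D \<Longrightarrow> a \<in> I t \<Longrightarrow> b \<in> I (Suc t) \<Longrightarrow> D (Suc t) a b \<in> m"
  unfolding minimal_res_def by (metis One_nat_def Suc_le_mono diff_Suc_1 le0)

lemma chain_lift_of_zero_in_ideal:
  assumes F: "free_res s A K I D g" and mF: "minimal_res m I D" and mI: "is_ideal m"
    and X: "chain_lift_of_zero s K I D g X" and a: "a \<in> I t" and i: "i \<in> I t"
  shows "X t a i \<in> m"
proof -
  have left: "matmul (I (Suc t)) (D (Suc t)) H a i \<in> m" for H
    unfolding matmul_def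
    by (rule ideal_sum[OF mI], rule ideal_mult_right[OF mI], rule minimal_resD[OF mF a])
  show ?thesis
  proof (cases t)
    case 0
    then show ?thesis
      unfolding null_homotopy_eq[OF F X a i] using left by simp
  next
    case (Suc t')
    have "matmul (I t') H (D (Suc t')) a i \<in> m" for H
      unfolding matmul_def
      by (rule ideal_sum[OF mI], rule ideal_mult_left[OF mI], rule minimal_resD[OF mF]) (use i Suc in auto)
    then show ?thesis
      unfolding null_homotopy_eq[OF F X a i] using left Suc by (simp add: ideal_add[OF mI])
  qed
qed

lemma card_le_of_minimal_res:
  fixes I :: "nat \<Rightarrow> 'i set" and J :: "nat \<Rightarrow> 'j set"
  assumes m: "local_ring_max m"
    and F: "free_res s A K I D g" and mF: "minimal_res m I D" and G: "free_res s A K J E h"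
  shows "card (I t) \<le> card (J t)"
proof (rule card_le_of_inverse_mod_max_ideal[OF m free_res_finite[OF F] free_res_finite[OF G]])
  let ?\<phi> = "comparison_map s K I D g J E h" and ?\<psi> = "comparison_map s K J E h I D g"
  have "chain_lift_of_zero s K I D g (\<lambda>t b i. matmul (J t) (?\<psi> t) (?\<phi> t) b i - (if b = i then 1 else 0))"
    using chain_map_comparison_map[OF F G] chain_map_comparison_map[OF G F]
    by (rule chain_lift_of_zero_comp_minus_id[OF F G])
  then show "\<forall>a\<in>I t. \<forall>b\<in>I t. matmul (J t) (?\<psi> t) (?\<phi> t) a b - (if a = b then 1 else 0) \<in> m"
    using chain_lift_of_zero_in_ideal[OF F mF local_ring_max_ideal[OF m]] by blast
qed

section \<open>Betti numbers\<close>

text \<open>\<^const>\<open>betti\<close> only looks at resolutions indexed by \<^typ>\<open>nat\<close>; a resolution with finite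
  bases indexed by any type is transported there along an injection.\<close>

context
  fixes s :: "'a::comm_ring_1 \<Rightarrow> 'b::ab_group_add \<Rightarrow> 'b" and A K and I :: "nat \<Rightarrow> 'i set" and D g
    and f :: "'i \<Rightarrow> 'j" and U
  assumes res: "free_res s A K I D g" and inj: "inj_on f U" and I_U: "\<And>t. I t \<subseteq> U"
begin

definition reindex_pull :: "'i set \<Rightarrow> ('j \<Rightarrow> 'a) \<Rightarrow> 'i \<Rightarrow> 'a" where
  "reindex_pull S x = (\<lambda>i. if i \<in> S then x (f i) else 0)"

definition reindex_push :: "'i set \<Rightarrow> ('i \<Rightarrow> 'a) \<Rightarrow> 'j \<Rightarrow> 'a" where
  "reindex_push S x = (\<lambda>a. if a \<in> f ` S then x (inv_into U f a) else 0)"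

definition reindex_diff :: "nat \<Rightarrow> 'j \<Rightarrow> 'j \<Rightarrow> 'a" where
  "reindex_diff t a b = D t (inv_into U f a) (inv_into U f b)"

definition reindex_gen :: "'j \<Rightarrow> 'b" where
  "reindex_gen a = g (inv_into U f a)"

lemma reindex_inv_into: "i \<in> I t \<Longrightarrow> inv_into U f (f i) = i"
  using inj I_U by (meson inv_into_f_f subsetD)

lemma reindex_inj_on: "inj_on f (I t)"
  using inj I_U by (rule inj_on_subset)

lemma reindex_pull_vecs: "reindex_pull S x \<in> vecs S"
  by (simp add: reindex_pull_def vecs_def)

lemma reindex_push_vecs: "reindex_push S x \<in> vecs (f ` S)"
  by (simp add: reindex_push_def vecs_def)

lemma reindex_push_pull: "x \<in> vecs (f ` I t) \<Longrightarrow> reindex_push (I t) (reindex_pull (I t) x) = x"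
  by (auto simp: reindex_push_def reindex_pull_def fun_eq_iff vecs_def reindex_inv_into)

lemma reindex_pull_push: "x \<in> vecs (I t) \<Longrightarrow> reindex_pull (I t) (reindex_push (I t) x) = x"
  by (auto simp: reindex_push_def reindex_pull_def fun_eq_iff vecs_def reindex_inv_into)

lemma lincomb_reindex: "lincomb s (f ` I t) x reindex_gen = lincomb s (I t) (reindex_pull (I t) x) g"
  unfolding lincomb_def sum.reindex[OF reindex_inj_on] reindex_pull_def reindex_gen_def
  by (intro sum.cong) (auto simp: reindex_inv_into)

lemma matapp_reindex:
  "matapp (f ` I t) (f ` I u) (reindex_diff v) y = reindex_push (I t) (matapp (I t) (I u) (D v) (reindex_pull (I u) y))"
proof -
  have "(\<Sum>b\<in>f ` I u. reindex_diff v (f i) b * y b) = (\<Sum>k\<in>I u. D v i k * reindex_pull (I u) y k)" if "i \<in> I t" for i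
    unfolding sum.reindex[OF reindex_inj_on] reindex_diff_def reindex_pull_def using that
    by (intro sum.cong) (auto simp: reindex_inv_into)
  then show ?thesis
    by (auto simp: matapp_def reindex_push_def fun_eq_iff reindex_inv_into)
qed

lemma boundary_reindex:
  assumes x: "x \<in> vecs (f ` I t)"
  shows "(\<exists>y\<in>vecs (f ` I u). x = matapp (f ` I t) (f ` I u) (reindex_diff v) y) \<longleftrightarrow>
    (\<exists>y\<in>vecs (I u). reindex_pull (I t) x = matapp (I t) (I u) (D v) y)"
proof
  assume "\<exists>y\<in>vecs (f ` I u). x = matapp (f ` I t) (f ` I u) (reindex_diff v) y"
  then obtain y where "x = matapp (f ` I t) (f ` I u) (reindex_diff v) y"
    by blast
  then have "reindex_pull (I t) x = matapp (I t) (I u) (D v) (reindex_pull (I u) y)"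
    unfolding matapp_reindex by (simp add: reindex_pull_push matapp_def vecs_def)
  then show "\<exists>y\<in>vecs (I u). reindex_pull (I t) x = matapp (I t) (I u) (D v) y"
    using reindex_pull_vecs by blast
next
  assume "\<exists>y\<in>vecs (I u). reindex_pull (I t) x = matapp (I t) (I u) (D v) y"
  then obtain y where y: "y \<in> vecs (I u)" "reindex_pull (I t) x = matapp (I t) (I u) (D v) y"
    by blast
  then have "x = matapp (f ` I t) (f ` I u) (reindex_diff v) (reindex_push (I u) y)"
    unfolding matapp_reindex reindex_pull_push[OF y(1)] by (simp flip: y(2) add: reindex_push_pull[OF x])
  then show "\<exists>y\<in>vecs (f ` I u). x = matapp (f ` I t) (f ` I u) (reindex_diff v) y"
    using reindex_push_vecs by blast
qed

lemma matapp_reindex_eq_0: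
  "matapp (f ` I t) (f ` I u) (reindex_diff v) x = 0 \<longleftrightarrow> matapp (I t) (I u) (D v) (reindex_pull (I u) x) = 0"
proof -
  have "reindex_push (I t) y = 0 \<longleftrightarrow> y = 0" if "y \<in> vecs (I t)" for y
  proof
    assume "reindex_push (I t) y = 0"
    then have "reindex_pull (I t) (reindex_push (I t) y) = 0"
      by (simp add: reindex_pull_def fun_eq_iff)
    then show "y = 0"
      unfolding reindex_pull_push[OF that] .
  qed (simp add: reindex_push_def fun_eq_iff)
  then show ?thesis
    unfolding matapp_reindex by (simp add: matapp_def vecs_def)
qed

lemma free_res_reindex: "free_res s A K (\<lambda>t. f ` I t) reindex_diff reindex_gen"
  unfolding free_res_def
proof (intro conjI allI ballI impI)
  show "subquot s A K" and "finite (f ` I t)" for t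
    using res by (simp_all add: free_res_def)
  show "reindex_gen ` f ` I 0 \<subseteq> A"
    using res by (auto simp: free_res_def reindex_gen_def reindex_inv_into)
next
  fix a assume "a \<in> A"
  then obtain x where x: "x \<in> vecs (I 0)" "a - lincomb s (I 0) x g \<in> K"
    using res by (auto simp: free_res_def)
  then show "\<exists>x\<in>vecs (f ` I 0). a - lincomb s (f ` I 0) x reindex_gen \<in> K"
    using reindex_push_vecs by (metis lincomb_reindex reindex_pull_push)
next
  fix x :: "'j \<Rightarrow> 'a" assume "x \<in> vecs (f ` I 0)"
  then show "lincomb s (f ` I 0) x reindex_gen \<in> K \<longleftrightarrow>
      (\<exists>y\<in>vecs (f ` I 1). x = matapp (f ` I 0) (f ` I 1) (reindex_diff 1) y)"
    using free_res_exact[OF res reindex_pull_vecs, of 0] by (simp add: lincomb_reindex boundary_reindex)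
next
  fix t and x :: "'j \<Rightarrow> 'a" assume "1 \<le> t" "x \<in> vecs (f ` I t)"
  moreover have "\<forall>x\<in>vecs (I t). matapp (I (t - 1)) (I t) (D t) x = 0 \<longleftrightarrow>
      (\<exists>y\<in>vecs (I (Suc t)). x = matapp (I t) (I (Suc t)) (D (Suc t)) y)"
    using res \<open>1 \<le> t\<close> by (simp add: free_res_def)
  ultimately show "matapp (f ` I (t - 1)) (f ` I t) (reindex_diff t) x = 0 \<longleftrightarrow>
      (\<exists>y\<in>vecs (f ` I (Suc t)). x = matapp (f ` I t) (f ` I (Suc t)) (reindex_diff (Suc t)) y)"
    by (simp add: matapp_reindex_eq_0 boundary_reindex reindex_pull_vecs)
qed

lemma minimal_res_reindex: "minimal_res m I D \<Longrightarrow> minimal_res m (\<lambda>t. f ` I t) reindex_diff"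
  unfolding minimal_res_def reindex_diff_def by (auto simp: reindex_inv_into)

end

lemma betti_eq_card:
  fixes I :: "nat \<Rightarrow> 'i set"
  assumes m: "local_ring_max m" and F: "free_res s A K I D g" and mF: "minimal_res m I D"
  shows "betti m s A K t = card (I t)"
proof -
  let ?U = "\<Union>t. I t"
  have "countable ?U"
    using free_res_finite[OF F] by (simp add: countable_finite)
  then have inj: "inj_on (to_nat_on ?U) ?U"
    by (rule inj_on_to_nat_on)
  have I_U: "I t \<subseteq> ?U" for t
    by auto
  obtain I' :: "nat \<Rightarrow> nat set" and D' g' where F': "free_res s A K I' D' g'"
    and mF': "minimal_res m I' D'" and card': "card (I' t) = card (I t)"
    using free_res_reindex[OF F inj I_U] minimal_res_reindex[OF F inj I_U mF]
      card_image[OF inj_on_subset[OF inj I_U]] by blast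
  show ?thesis
    unfolding betti_def
  proof (rule the_equality)
    show "\<exists>(I'::nat \<Rightarrow> nat set) D g. free_res s A K I' D g \<and> minimal_res m I' D \<and> card (I' t) = card (I t)"
      using F' mF' card' by blast
  next
    fix n assume "\<exists>(I'::nat \<Rightarrow> nat set) D g. free_res s A K I' D g \<and> minimal_res m I' D \<and> card (I' t) = n"
    then obtain I'' :: "nat \<Rightarrow> nat set" and D'' g'' where
      "free_res s A K I'' D'' g''" "minimal_res m I'' D''" "card (I'' t) = n"
      by blast
    then show "n = card (I t)"
      using card_le_of_minimal_res[OF m F mF] card_le_of_minimal_res[OF m _ _ F] by (metis le_antisym)
  qed
qed

section \<open>The complex \<open>S\<^sub>j F\<close>\<close>

lemma minimal_res_symD:
  assumes mF: "minimal_res m I D" and mI: "is_ideal m"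
  shows "minimal_res m (symI j q I) (\<lambda>_. symD q I D)"
  unfolding minimal_res_def
proof (intro allI impI ballI)
  fix t ys xs assume xs: "xs \<in> symI j q I t"
  have "sym_comp I D i ys xs \<in> m" if "i < q" for i
  proof -
    have "set_mset (xs ! Suc i) \<subseteq> I (Suc i)"
      using xs that by (simp add: symI_def)
    then show ?thesis
      unfolding sym_comp_def
      by (auto intro!: ideal_sum[OF mI] ideal_mult_left[OF mI] ideal_uminus[OF mI] minimal_resD[OF mF]
          simp: ideal_zero[OF mI])
  qed
  then show "symD q I D ys xs \<in> m"
    unfolding symD_def by (intro ideal_sum[OF mI] ideal_mult_left[OF mI]) auto
qed

text \<open>Basis of \<open>D\<^sub>k(F)\<close> (\<open>alt = False\<close>) or \<open>\<Lambda>\<^sup>k F\<close> (\<open>alt = True\<close>) for \<open>F\<close> free on \<open>S\<close>,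
  encoded by multisets as in \<^const>\<open>symI\<close>.\<close>

definition power_basis :: "bool \<Rightarrow> 'a set \<Rightarrow> nat \<Rightarrow> 'a multiset set" where
  "power_basis alt S k = {X. set_mset X \<subseteq> S \<and> (alt \<longrightarrow> (\<forall>x. count X x \<le> 1)) \<and> size X = k}"

lemma power_basis_alt_eq: "finite S \<Longrightarrow> power_basis True S k = mset_set ` {B. B \<subseteq> S \<and> card B = k}"
proof (intro set_eqI iffI)
  fix X assume "X \<in> power_basis True S k"
  then have X: "set_mset X \<subseteq> S" "\<forall>x. count X x \<le> 1" "size X = k"
    by (auto simp: power_basis_def)
  then have "X = mset_set (set_mset X)"
    by (intro multiset_eqI) (metis count_eq_zero_iff count_mset_set' le_antisym not_le_imp_less
        less_one finite_set_mset)
  with X show "X \<in> mset_set ` {B. B \<subseteq> S \<and> card B = k}"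
    by (metis (mono_tags, lifting) image_eqI mem_Collect_eq size_mset_set)
next
  fix X assume "finite S" "X \<in> mset_set ` {B. B \<subseteq> S \<and> card B = k}"
  then obtain B where "B \<subseteq> S" "card B = k" "X = mset_set B" "finite B"
    using finite_subset by blast
  then show "X \<in> power_basis True S k"
    by (auto simp: power_basis_def count_mset_set')
qed

lemma
  assumes "finite S"
  shows finite_power_basis: "finite (power_basis alt S k)"
    and card_power_basis:
      "card (power_basis alt S k) = (if alt then card S choose k else (card S + k - 1) choose k)"
proof -
  have inj: "inj_on mset_set {B. B \<subseteq> S \<and> card B = k}"
    using assms by (intro inj_onI) (metis finite_subset finite_set_mset_mset_set mem_Collect_eq)
  have "power_basis False S k = multisets_of_size S k"
    by (simp add: power_basis_def multisets_of_size_def)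
  then show "finite (power_basis alt S k)"
    and "card (power_basis alt S k) = (if alt then card S choose k else (card S + k - 1) choose k)"
    using assms power_basis_alt_eq[OF assms] card_image[OF inj] n_subsets[OF assms]
    by (cases alt; simp add: card_multisets_of_size finite_multisets_of_size)+
qed

lemma finite_lists_nth_mem:
  assumes "\<And>i. i < n \<Longrightarrow> finite (A i)"
  shows "finite {xs. length xs = n \<and> (\<forall>i<n. xs ! i \<in> A i)}"
proof (rule finite_subset)
  show "{xs. length xs = n \<and> (\<forall>i<n. xs ! i \<in> A i)} \<subseteq> {xs. set xs \<subseteq> (\<Union>i<n. A i) \<and> length xs = n}"
    by (force simp: in_set_conv_nth)
  show "finite {xs. set xs \<subseteq> (\<Union>i<n. A i) \<and> length xs = n}"
    using assms by (intro finite_lists_length_eq) auto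
qed

lemma card_lists_nth_mem:
  assumes "\<And>i. i < n \<Longrightarrow> finite (A i)"
  shows "card {xs. length xs = n \<and> (\<forall>i<n. xs ! i \<in> A i)} = (\<Prod>i<n. card (A i))"
  using assms
proof (induction n arbitrary: A)
  case (Suc n)
  let ?T = "{ys. length ys = n \<and> (\<forall>i<n. ys ! i \<in> A (Suc i))}"
  have "{xs. length xs = Suc n \<and> (\<forall>i<Suc n. xs ! i \<in> A i)} = (\<lambda>(x, ys). x # ys) ` (A 0 \<times> ?T)"
  proof (intro set_eqI iffI)
    fix xs assume "xs \<in> {xs. length xs = Suc n \<and> (\<forall>i<Suc n. xs ! i \<in> A i)}"
    then show "xs \<in> (\<lambda>(x, ys). x # ys) ` (A 0 \<times> ?T)"
      by (cases xs) (force simp: image_iff)+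
  qed (auto simp: less_Suc_eq_0_disj)
  moreover have "inj_on (\<lambda>(x, ys). x # ys) (A 0 \<times> ?T)"
    by (auto simp: inj_on_def)
  moreover have "card ?T = (\<Prod>i<n. card (A (Suc i)))"
    using Suc by simp
  ultimately show ?case
    by (simp add: card_image card_cartesian_product prod.lessThan_Suc_shift del: prod.lessThan_Suc)
qed simp

lemma card_symI:
  assumes "\<And>i. finite (I i)"
  shows "card (symI j q I t) = (\<Sum>a\<in>{a. length a = Suc q \<and> sum_list a = j \<and> (\<Sum>i\<le>q. i * a ! i) = t}.
    \<Prod>i<Suc q. card (power_basis (odd i) (I i) (a ! i)))"
proof -
  let ?V = "{a. length a = Suc q \<and> sum_list a = j \<and> (\<Sum>i\<le>q. i * a ! i) = t}"
  let ?L = "\<lambda>a. {xs. length xs = Suc q \<and> (\<forall>i<Suc q. xs ! i \<in> power_basis (odd i) (I i) (a ! i))}"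
  have sum_list: "sum_list a = (\<Sum>i\<le>q. a ! i)" if "length a = Suc q" for a :: "nat list"
    using that by (simp add: sum_list_sum_nth atLeast0LessThan lessThan_Suc_atMost)
  have "symI j q I t = (\<Union>a\<in>?V. ?L a)"
  proof (intro set_eqI iffI)
    fix xs assume "xs \<in> symI j q I t"
    then have "map size xs \<in> ?V \<and> xs \<in> ?L (map size xs)"
      by (auto simp: symI_def power_basis_def sum_list less_Suc_eq_le)
    then show "xs \<in> (\<Union>a\<in>?V. ?L a)"
      by blast
  next
    fix xs assume "xs \<in> (\<Union>a\<in>?V. ?L a)"
    then obtain a where a: "a \<in> ?V" and xs: "xs \<in> ?L a"
      by blast
    then have "map size xs = a"
      by (intro nth_equalityI) (auto simp: power_basis_def)
    then show "xs \<in> symI j q I t"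
      using a xs by (auto simp: symI_def power_basis_def sum_list less_Suc_eq_le)
  qed
  moreover have "finite ?V"
  proof (rule finite_subset)
    show "?V \<subseteq> {a. set a \<subseteq> {0..j} \<and> length a = Suc q}"
      by (auto dest: member_le_sum_list)
  qed (simp add: finite_lists_length_eq)
  moreover have "?L a \<inter> ?L b = {}" if "a \<in> ?V" "b \<in> ?V" "a \<noteq> b" for a b
    using that by (auto simp: power_basis_def intro!: nth_equalityI)
  ultimately show ?thesis
    using assms by (simp add: card_UN_disjoint finite_lists_nth_mem finite_power_basis card_lists_nth_mem)
qed

lemma symI_take_iff:
  assumes "p \<le> q" "length xs = Suc q" "\<And>i. p < i \<Longrightarrow> i \<le> q \<Longrightarrow> xs ! i = {#}"
  shows "xs \<in> symI j q I t \<longleftrightarrow> take (Suc p) xs \<in> symI j p I t"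
proof -
  have take: "take (Suc p) xs ! i = xs ! i" if "i \<le> p" for i
    using that by simp
  have sums: "(\<Sum>i\<le>q. h i (xs ! i)) = (\<Sum>i\<le>p. h i (take (Suc p) xs ! i))"
    if "\<And>i. h i {#} = 0" for h :: "nat \<Rightarrow> nat multiset \<Rightarrow> nat"
  proof -
    have "(\<Sum>i\<le>q. h i (xs ! i)) = (\<Sum>i\<le>p. h i (xs ! i))"
      using assms that by (intro sum.mono_neutral_right) auto
    then show ?thesis
      by (simp add: take)
  qed
  have entries: "(\<forall>i\<le>q. P i (xs ! i)) \<longleftrightarrow> (\<forall>i\<le>p. P i (take (Suc p) xs ! i))"
    if "\<And>i. P i {#}" for P
    using assms that take by (metis le_trans nat_le_linear not_le)
  have "(\<Sum>i\<le>q. size (xs ! i)) = (\<Sum>i\<le>p. size (take (Suc p) xs ! i))"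
    by (rule sums[of "\<lambda>_. size"]) simp
  moreover have "(\<Sum>i\<le>q. i * size (xs ! i)) = (\<Sum>i\<le>p. i * size (take (Suc p) xs ! i))"
    by (rule sums[of "\<lambda>i X. i * size X"]) simp
  moreover have "(\<forall>i\<le>q. set_mset (xs ! i) \<subseteq> I i \<and> (odd i \<longrightarrow> (\<forall>x. count (xs ! i) x \<le> 1))) \<longleftrightarrow>
      (\<forall>i\<le>p. set_mset (take (Suc p) xs ! i) \<subseteq> I i \<and> (odd i \<longrightarrow> (\<forall>x. count (take (Suc p) xs ! i) x \<le> 1)))"
    by (rule entries) simp
  ultimately show ?thesis
    unfolding symI_def mem_Collect_eq using assms(1,2) by simp
qed

lemma card_symI_truncate:
  assumes "p \<le> q" and I: "\<And>i. p < i \<Longrightarrow> I i = {}"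
  shows "card (symI j q I t) = card (symI j p I t)"
proof -
  let ?pad = "\<lambda>ys. ys @ replicate (q - p) ({#} :: nat multiset)"
  have "symI j q I t = ?pad ` symI j p I t"
  proof (intro set_eqI iffI)
    fix xs assume xs: "xs \<in> symI j q I t"
    then have len: "length xs = Suc q" and tail: "\<And>i. p < i \<Longrightarrow> i \<le> q \<Longrightarrow> xs ! i = {#}"
      using I by (auto simp: symI_def)
    have "xs = ?pad (take (Suc p) xs)"
      using len tail assms(1) by (intro nth_equalityI) (auto simp: nth_append)
    moreover have "take (Suc p) xs \<in> symI j p I t"
      using symI_take_iff[OF assms(1) len tail] xs by simp
    ultimately show "xs \<in> ?pad ` symI j p I t"
      by blast
  next
    fix xs assume "xs \<in> ?pad ` symI j p I t"
    then obtain ys where ys: "ys \<in> symI j p I t" "xs = ?pad ys"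
      by blast
    then have "length ys = Suc p"
      by (simp add: symI_def)
    then have "length xs = Suc q" "\<And>i. p < i \<Longrightarrow> i \<le> q \<Longrightarrow> xs ! i = {#}" "take (Suc p) xs = ys"
      using ys(2) assms(1) by (auto simp: nth_append)
    then show "xs \<in> symI j q I t"
      using symI_take_iff[OF assms(1)] ys(1) by blast
  qed
  moreover have "inj_on ?pad (symI j p I t)"
    by (simp add: inj_on_def)
  ultimately show ?thesis
    by (simp add: card_image)
qed

lemma card_symI_binomial:
  assumes "\<And>i. finite (I i)"
  shows "card (symI j p I t) = (\<Sum>a\<in>{a. length a = Suc p \<and> sum_list a = j \<and> (\<Sum>i\<le>p. i * a ! i) = t}.
      (\<Prod>i\<in>{i. i \<le> p \<and> even i}. (card (I i) + a ! i - 1) choose (a ! i)) *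
      (\<Prod>i\<in>{i. i \<le> p \<and> odd i}. card (I i) choose (a ! i)))"
proof -
  have "{..<Suc p} \<inter> {i. odd i} = {i. i \<le> p \<and> odd i}" "{..<Suc p} \<inter> - {i. odd i} = {i. i \<le> p \<and> even i}"
    by auto
  then show ?thesis
    unfolding card_symI[OF assms] card_power_basis[OF assms] prod.If_cases[OF finite_lessThan]
    by (simp only: mult.commute)
qed

section \<open>Betti numbers of \<open>S\<^sub>j(M)\<close>\<close>

lemma pdim_le_length:
  fixes I :: "nat \<Rightarrow> nat set"
  assumes "free_res s A K I D g" "\<forall>t>n. I t = {}"
  shows "pdim s A K \<le> enat n"
  unfolding pdim_def using assms by (auto intro: Least_le)

lemma pdim_eq_enatD:
  assumes "pdim s A K = enat p"
  obtains I :: "nat \<Rightarrow> nat set" and D g where "free_res s A K I D g" "\<forall>t>p. I t = {}"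
proof -
  let ?P = "\<lambda>n. \<exists>(I::nat \<Rightarrow> nat set) D g. free_res s A K I D g \<and> (\<forall>t>n. I t = {})"
  have ex: "\<exists>n. ?P n"
    using assms unfolding pdim_def by (metis enat.distinct(2))
  then have "p = (LEAST n. ?P n)"
    using assms unfolding pdim_def by simp
  then have "?P p"
    using LeastI_ex[OF ex] by simp
  then show thesis
    using that by blast
qed

lemma minimal_res_empty_above_pdim:
  fixes I :: "nat \<Rightarrow> 'i set"
  assumes m: "local_ring_max m" and F: "free_res s A K I D g" and mF: "minimal_res m I D"
    and "pdim s A K = enat p" and "p < t"
  shows "I t = {}"
proof -
  obtain J :: "nat \<Rightarrow> nat set" and E h where G: "free_res s A K J E h" and "\<forall>t>p. J t = {}"
    using assms(4) by (rule pdim_eq_enatD)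
  then have "card (I t) \<le> 0"
    using card_le_of_minimal_res[OF m F mF G, of t] \<open>p < t\<close> by simp
  then show ?thesis
    using free_res_finite[OF F] by simp
qed

theorem corollary5p2:
  fixes m :: "'a::comm_ring_1 set" and s :: "'a \<Rightarrow> 'm::ab_group_add \<Rightarrow> 'm" and j p :: nat
  assumes "noetherian_ring TYPE('a)" and "local_ring_max m"
    and "module s" and "fin_gen s" and "j \<ge> 2"
    and "pdim s UNIV {0} = enat p"
    and "SW m s j"
  shows "\<forall>t. enat t \<le> pdim sym_scale (symA j) (symK s j) \<longrightarrow>
    betti m sym_scale (symA j) (symK s j) t =
      (\<Sum>a\<in>{a::nat list. length a = Suc p \<and> sum_list a = j \<and> (\<Sum>i\<le>p. i * a ! i) = t}.
         (\<Prod>i\<in>{i. i \<le> p \<and> even i}. (betti m s UNIV {0} i + a ! i - 1) choose (a ! i)) *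
         (\<Prod>i\<in>{i. i \<le> p \<and> odd i}. betti m s UNIV {0} i choose (a ! i)))"
proof (intro allI impI)
  fix t
  note m = \<open>local_ring_max m\<close>
  obtain q and I :: "nat \<Rightarrow> nat set" and D g g' where F: "free_res s UNIV {0} I D g"
    and mF: "minimal_res m I D" and "\<forall>t>q. I t = {}"
    and S: "free_res sym_scale (symA j) (symK s j) (symI j q I) (\<lambda>_. symD q I D) g'"
    using \<open>SW m s j\<close> unfolding SW_def by blast
  have "p \<le> q"
    using pdim_le_length[OF F \<open>\<forall>t>q. I t = {}\<close>] \<open>pdim s UNIV {0} = enat p\<close> by simp
  have "betti m sym_scale (symA j) (symK s j) t = card (symI j q I t)"
    using betti_eq_card[OF m S minimal_res_symD[OF mF local_ring_max_ideal[OF m]]] .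
  also have "\<dots> = card (symI j p I t)"
    using card_symI_truncate[OF \<open>p \<le> q\<close> minimal_res_empty_above_pdim[OF m F mF \<open>pdim s UNIV {0} = enat p\<close>]] .
  also have "\<dots> = (\<Sum>a\<in>{a::nat list. length a = Suc p \<and> sum_list a = j \<and> (\<Sum>i\<le>p. i * a ! i) = t}.
         (\<Prod>i\<in>{i. i \<le> p \<and> even i}. (betti m s UNIV {0} i + a ! i - 1) choose (a ! i)) *
         (\<Prod>i\<in>{i. i \<le> p \<and> odd i}. betti m s UNIV {0} i choose (a ! i)))"
    unfolding betti_eq_card[OF m F mF] by (rule card_symI_binomial[OF free_res_finite[OF F]])
  finally show "betti m sym_scale (symA j) (symK s j) t = \<dots>" .
qed

end
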